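(* Let $q \ge 2$ and $n \ge 1$ be integers and let $\Sigma = \{0,1,\dots,q-1\}$. The number of words of length $2^n-1$ over $\Sigma$ that are $Z_n$ instances is exactly $q^n$.
   Context: Zimin words are defined recursively over an alphabet of variables $x_1, x_2, \dots$ by $Z_1 = x_1$ and $Z_{k+1} = Z_k\, x_{k+1}\, Z_k$; thus $Z_k$ has length $2^k-1$ and uses the $k$ distinct letters $x_1,\dots,x_k$ (e.g. $Z_2 = x_1x_2x_1$, $Z_3 = x_1x_2x_1x_3x_1x_2x_1$). A word $W$ over $\Sigma$ is an instance of a word $V$ (a "$V$ instance") if there is a non-erasing monoid homomorphism $\phi$ from words over the letters of $V$ to $\Sigma^+$ (i.e. every letter is sent to a nonempty word) with $\phi(V) = W$. *)

theory Defs
  imports Main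
begin

text \<open>Zimin words over the variable alphabet nat: the variable x_(i+1) is encoded as i.
  zimin 0 is the empty word (auxiliary), zimin (Suc k) = zimin k @ [k] @ zimin k,
  so zimin 1 = [0] = Z_1 and zimin k = Z_k uses variables 0..k-1.\<close>
fun zimin :: "nat \<Rightarrow> nat list" where
  "zimin 0 = []"
| "zimin (Suc k) = zimin k @ [k] @ zimin k"

definition is_instance :: "'a list \<Rightarrow> 'v list \<Rightarrow> bool" where
  "is_instance W V \<longleftrightarrow>
     (\<exists>\<phi> :: 'v \<Rightarrow> 'a list. (\<forall>x\<in>set V. \<phi> x \<noteq> []) \<and> concat (map \<phi> V) = W)"

end

theory Submission
  imports Defs "HOL-Library.FuncSet"
begin

text \<open>A non-erasing substitution never shortens a word, so an instance of V of the same length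
  as V must send every letter to a single letter. Instances of length |V| over an alphabet A
  are therefore exactly the words map g V with g : set V \<rightarrow> A, and distinct g give distinct
  words; hence there are |A|^|set V| of them.\<close>

lemma length_concat_map_nonempty_ge:
  assumes "\<forall>x\<in>set V. \<phi> x \<noteq> []"
  shows "length V \<le> length (concat (map \<phi> V))"
  using assms
proof (induction V)
  case (Cons a V)
  have "1 \<le> length (\<phi> a)" using Cons.prems by (simp add: Suc_le_eq)
  moreover have "length V \<le> length (concat (map \<phi> V))" using Cons by simp
  ultimately show ?case by simp
qed simp

lemma concat_map_eq_map_hd_if_length_eq:
  assumes "\<forall>x\<in>set V. \<phi> x \<noteq> []" and "length (concat (map \<phi> V)) = length V"
  shows "concat (map \<phi> V) = map (\<lambda>x. hd (\<phi> x)) V"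
  using assms
proof (induction V)
  case Nil
  then show ?case by simp
next
  case (Cons a V)
  have "length V \<le> length (concat (map \<phi> V))"
    using Cons.prems(1) by (intro length_concat_map_nonempty_ge) simp
  moreover have "1 \<le> length (\<phi> a)" using Cons.prems(1) by (simp add: Suc_le_eq)
  moreover have "length (\<phi> a) + length (concat (map \<phi> V)) = 1 + length V"
    using Cons.prems(2) by simp
  ultimately have "length (\<phi> a) = 1" and rest: "length (concat (map \<phi> V)) = length V"
    by linarith+
  then obtain c where "\<phi> a = [c]" by (cases "\<phi> a") auto
  with Cons.IH Cons.prems(1) rest show ?case by simp
qed

lemma is_instance_same_length_iff:
  "is_instance W V \<and> length W = length V \<longleftrightarrow> (\<exists>f. W = map f V)"
proof
  assume "is_instance W V \<and> length W = length V"
  then obtain \<phi> where "\<forall>x\<in>set V. \<phi> x \<noteq> []" "concat (map \<phi> V) = W" "length W = length V"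
    unfolding is_instance_def by blast
  then have "W = map (\<lambda>x. hd (\<phi> x)) V"
    using concat_map_eq_map_hd_if_length_eq[of V \<phi>] by simp
  then show "\<exists>f. W = map f V" by blast
next
  assume "\<exists>f. W = map f V"
  then obtain f where "W = map f V" ..
  moreover have "concat (map (\<lambda>x. [f x]) V) = map f V"
    by (induction V) simp_all
  ultimately show "is_instance W V \<and> length W = length V"
    unfolding is_instance_def by (intro conjI exI[of _ "\<lambda>x. [f x]"]) simp_all
qed

lemma same_length_instances_eq_image_PiE:
  "{w. length w = length V \<and> set w \<subseteq> A \<and> is_instance w V}
     = (\<lambda>g. map g V) ` (set V \<rightarrow>\<^sub>E A)"
proof (intro equalityI subsetI)
  fix w assume "w \<in> {w. length w = length V \<and> set w \<subseteq> A \<and> is_instance w V}"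
  then obtain f where w: "w = map f V" and A: "set w \<subseteq> A"
    using is_instance_same_length_iff by blast
  have "w = map (restrict f (set V)) V" using w by simp
  moreover have "restrict f (set V) \<in> set V \<rightarrow>\<^sub>E A" using w A by auto
  ultimately show "w \<in> (\<lambda>g. map g V) ` (set V \<rightarrow>\<^sub>E A)" by blast
next
  fix w assume "w \<in> (\<lambda>g. map g V) ` (set V \<rightarrow>\<^sub>E A)"
  then obtain g where "g \<in> set V \<rightarrow>\<^sub>E A" and w: "w = map g V" by blast
  moreover have "is_instance w V" using w is_instance_same_length_iff by blast
  ultimately show "w \<in> {w. length w = length V \<and> set w \<subseteq> A \<and> is_instance w V}" by auto
qed

lemma inj_on_map_PiE: "inj_on (\<lambda>g. map g V) (set V \<rightarrow>\<^sub>E A)"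
  by (intro inj_onI PiE_ext) (auto simp: map_eq_conv)

lemma card_same_length_instances:
  assumes "finite A"
  shows "card {w. length w = length V \<and> set w \<subseteq> A \<and> is_instance w V} = card A ^ card (set V)"
  unfolding same_length_instances_eq_image_PiE card_image[OF inj_on_map_PiE]
  using assms by (simp add: card_PiE)

lemma length_zimin: "length (zimin k) = 2 ^ k - 1"
  by (induction k) auto

lemma set_zimin: "set (zimin k) = {0..<k}"
  by (induction k) auto

theorem lemma1:
  fixes q n :: nat
  assumes "q \<ge> 2" and "n \<ge> 1"
  shows "card {w :: nat list. length w = 2 ^ n - 1 \<and> set w \<subseteq> {0..<q}
                 \<and> is_instance w (zimin n)} = q ^ n"
  using card_same_length_instances[of "{0..<q}" "zimin n"]
  by (simp add: length_zimin set_zimin)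

end
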